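(* Let $\mu$ be in the relative interior of $\Delta$. Suppose the updating rule respects the Blackwell order for $\mu$ and $\varphi=\varphi^{\mu}$ has a contractive error at some $x_1\in\Delta$ but produces no expansive error. Writing $\hat x_1=\varphi(x_1)\ne x_1$, there exists $x_1^*\in\ell(\mu,\hat x_1)$ such that $\varphi(x')=x_1^*$ for all $x'\in\ell^{\circ}(x_1^*,x_1)$.
   Context: Let $\Theta$ be a finite set of states, $|\Theta|=n\ge2$, and $\Delta=\Delta(\Theta)$ the simplex of beliefs. An experiment $\pi:\Theta\to\Delta(S)$ ($S$ finite) with prior $\mu$ induces the Bayesian distribution over posteriors $\rho_B$, a finitely supported distribution on $\Delta$ with mean $\mu$ (every such distribution arises from some experiment). Blackwell order: $\pi\succeq\pi'$ iff $\rho_B'$ is a mean-preserving contraction of $\rho_B$. An updating rule is given, for each prior $\mu$, by a distortion function $\varphi^{\mu}:\Delta\to\Delta$: when the Bayesian posterior is $x$, the decision maker holds belief $\varphi^{\mu}(x)$. For a compact action set $A$, continuous $u:A\times\Theta\to\mathbb{R}$, and consistent choice $a^*:\Delta\to A$ (i.e. $a^*(y)\in\arg\max_{a}\mathbb{E}_y u(a,\theta)$ for all $y$), let $W(x)=\mathbb{E}_x u(a^*(\varphi^{\mu}(x)),\theta)$. The rule respects the Blackwell order for $\mu$ if for all such $A,u,a^*$ and all $\pi\succeq\pi'$, $\mathbb{E}_{\rho_B}W\ge\mathbb{E}_{\rho_B'}W$. For $x,y\in\Delta$, $\ell(x,y)$ is the closed segment between them and $\ell^{\circ}(x,y)=\ell(x,y)\setminus\{x,y\}$.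 $\varphi$ has an expansive error at $x$ if $\varphi(x)\notin\ell(x,\mu)$, and a contractive error at $x$ if $\varphi(x)\in\ell(x,\mu)$ and $\varphi(x)\ne x$. *)

theory Defs
  imports "HOL-Analysis.Analysis" "HOL-Probability.Probability_Mass_Function"
begin

text \<open>States: a finite type 'n. Beliefs: vectors in real^'n lying in the belief_simplex.\<close>

definition belief_simplex :: "(real^'n) set" where
  "belief_simplex = {x. (\<forall>i. 0 \<le> x $ i) \<and> (\<Sum>i\<in>UNIV. x $ i) = 1}"

definition bexp :: "real^'n \<Rightarrow> ('n \<Rightarrow> real) \<Rightarrow> real" where
  "bexp y f = (\<Sum>i\<in>UNIV. y $ i * f i)"

text \<open>Finitely supported distribution over posteriors (in the belief_simplex) with mean mu;
  exactly the Bayesian distributions over posteriors induced by experiments with prior mu.\<close>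
definition bayes_plausible :: "real^'n \<Rightarrow> (real^'n) pmf \<Rightarrow> bool" where
  "bayes_plausible mu \<rho> \<longleftrightarrow> finite (set_pmf \<rho>) \<and> set_pmf \<rho> \<subseteq> belief_simplex \<and>
     (\<Sum>x\<in>set_pmf \<rho>. pmf \<rho> x *\<^sub>R x) = mu"

definition mpc :: "(real^'n) pmf \<Rightarrow> (real^'n) pmf \<Rightarrow> bool" where
  "mpc \<rho>' \<rho> \<longleftrightarrow> (\<exists>K. \<rho> = bind_pmf \<rho>' K \<and>
     (\<forall>x'\<in>set_pmf \<rho>'. finite (set_pmf (K x')) \<and>
        (\<Sum>y\<in>set_pmf (K x'). pmf (K x') y *\<^sub>R y) = x'))"

definition pexp :: "(real^'n) pmf \<Rightarrow> (real^'n \<Rightarrow> real) \<Rightarrow> real" where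
  "pexp \<rho> W = (\<Sum>x\<in>set_pmf \<rho>. pmf \<rho> x * W x)"

text \<open>Decision problem: compact action set A (actions represented in the type real^'n,
  which is w.l.o.g.), payoff u continuous (Theta is finite and discrete),
  and a consistent choice astar.\<close>
definition decision_problem ::
  "(real^'n) set \<Rightarrow> (real^'n \<Rightarrow> 'n \<Rightarrow> real) \<Rightarrow> (real^'n \<Rightarrow> real^'n) \<Rightarrow> bool" where
  "decision_problem A u astar \<longleftrightarrow> compact A \<and> (\<forall>i. continuous_on A (\<lambda>a. u a i)) \<and>
     (\<forall>y\<in>belief_simplex. astar y \<in> A \<and> (\<forall>b\<in>A. bexp y (u b) \<le> bexp y (u (astar y))))"

definition respects_blackwell :: "real^'n \<Rightarrow> (real^'n \<Rightarrow> real^'n) \<Rightarrow> bool" where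
  "respects_blackwell mu \<phi> \<longleftrightarrow>
     (\<forall>A u astar. decision_problem A u astar \<longrightarrow>
       (\<forall>\<rho> \<rho>'. bayes_plausible mu \<rho> \<and> bayes_plausible mu \<rho>' \<and> mpc \<rho>' \<rho> \<longrightarrow>
          pexp \<rho>' (\<lambda>x. bexp x (u (astar (\<phi> x)))) \<le> pexp \<rho> (\<lambda>x. bexp x (u (astar (\<phi> x))))))"

definition expansive_error :: "real^'n \<Rightarrow> (real^'n \<Rightarrow> real^'n) \<Rightarrow> real^'n \<Rightarrow> bool" where
  "expansive_error mu \<phi> x \<longleftrightarrow> \<phi> x \<notin> closed_segment x mu"

definition contractive_error :: "real^'n \<Rightarrow> (real^'n \<Rightarrow> real^'n) \<Rightarrow> real^'n \<Rightarrow> bool" where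
  "contractive_error mu \<phi> x \<longleftrightarrow> \<phi> x \<in> closed_segment x mu \<and> \<phi> x \<noteq> x"

end

theory Submission
  imports Defs
begin

(* Write L t = mu + t (x1 - mu). Without expansive errors, phi (L t) = L (sigma t) with
   0 <= sigma t <= t, and the contractive error at x1 = L 1 means sigma 1 < 1.
   Splitting a posterior L c into L c1 and L c2 is a mean-preserving spread of a two-point
   distribution on L c and a point beyond mu (which exists because mu is relatively interior),
   so respecting the Blackwell order makes the distorted value W convex along the ray, for
   every decision problem. For the bet paying t - r at L t, taken when the distorted belief
   says it pays, W (L t) = [r < sigma t] (t - r). Convexity of all these functions forces
   sigma to be constant, equal to some s <= sigma 1, on (s, 1); then x1* = L s. *)

lemma convex_on_eq:
  assumes "convex_on S f" "\<And>x. x \<in> S \<Longrightarrow> f x = g x"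
  shows "convex_on S g"
  using assms unfolding convex_on_def by (metis convexD)

lemma convex_belief_simplex: "convex belief_simplex"
proof (rule convexI)
  fix x y :: "real^'n" and u v :: real
  assume "x \<in> belief_simplex" "y \<in> belief_simplex" "0 \<le> u" "0 \<le> v" "u + v = 1"
  then show "u *\<^sub>R x + v *\<^sub>R y \<in> belief_simplex"
    by (simp add: belief_simplex_def sum.distrib flip: sum_distrib_left)
qed

lemma closed_segment_on_line:
  fixes mu d :: "'a::real_vector"
  shows "closed_segment (mu + a *\<^sub>R d) (mu + b *\<^sub>R d) = (\<lambda>t. mu + t *\<^sub>R d) ` closed_segment a b"
proof -
  have "closed_segment (a *\<^sub>R d) (b *\<^sub>R d) = (\<lambda>t. t *\<^sub>R d) ` closed_segment a b"
    by (rule closed_segment_linear_image) (simp add: linear_scaleR_left)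
  then show ?thesis
    by (simp add: closed_segment_translation image_image)
qed

lemma open_segment_on_line:
  fixes mu d :: "'a::real_vector"
  assumes "d \<noteq> 0"
  shows "open_segment (mu + a *\<^sub>R d) (mu + b *\<^sub>R d) = (\<lambda>t. mu + t *\<^sub>R d) ` open_segment a b"
proof -
  have "open_segment (a *\<^sub>R d) (b *\<^sub>R d) = (\<lambda>t. t *\<^sub>R d) ` open_segment a b"
    using assms by (intro open_segment_linear_image) (auto simp: linear_scaleR_left inj_on_def)
  then show ?thesis
    by (simp add: open_segment_translation image_image)
qed

lemma segment_in_belief_simplex:
  assumes "mu \<in> belief_simplex" "x \<in> belief_simplex" "0 \<le> t" "t \<le> 1"
  shows "mu + t *\<^sub>R (x - mu) \<in> belief_simplex"
proof -
  have "mu + t *\<^sub>R (x - mu) \<in> closed_segment mu x"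
    using closed_segment_on_line[of mu 0 "x - mu" 1] assms(3,4)
    by (auto simp: closed_segment_eq_real_ivl)
  then show ?thesis
    using assms(1,2) closed_segment_subset convex_belief_simplex by blast
qed

lemma sum_set_pmf_eq_expectation:
  fixes f :: "'a \<Rightarrow> 'b::{banach, second_countable_topology}"
  assumes "finite (set_pmf M)"
  shows "(\<Sum>x\<in>set_pmf M. pmf M x *\<^sub>R f x) = measure_pmf.expectation M f"
  by (rule integral_measure_pmf[OF assms, symmetric]) auto

lemma pexp_eq_expectation:
  "finite (set_pmf M) \<Longrightarrow> pexp M W = measure_pmf.expectation M W"
  using sum_set_pmf_eq_expectation[of M W] by (simp add: pexp_def)

definition two_point_pmf :: "real \<Rightarrow> 'a \<Rightarrow> 'a \<Rightarrow> 'a pmf" where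
  "two_point_pmf p a b = map_pmf (\<lambda>c. if c then a else b) (bernoulli_pmf p)"

lemma set_two_point_pmf_subset: "set_pmf (two_point_pmf p a b) \<subseteq> {a, b}"
  by (auto simp: two_point_pmf_def)

lemma finite_set_two_point_pmf: "finite (set_pmf (two_point_pmf p a b))"
  using set_two_point_pmf_subset by (rule finite_subset) simp

lemma expectation_two_point_pmf:
  fixes f :: "'a \<Rightarrow> 'b::{banach, second_countable_topology}"
  assumes "0 \<le> p" "p \<le> 1"
  shows "measure_pmf.expectation (two_point_pmf p a b) f = p *\<^sub>R f a + (1 - p) *\<^sub>R f b"
  using assms by (simp add: two_point_pmf_def integral_measure_pmf[of UNIV] UNIV_bool)

lemma bayes_plausible_bind:
  assumes bp: "bayes_plausible mu \<rho>"
    and K: "\<And>x. x \<in> set_pmf \<rho> \<Longrightarrow> finite (set_pmf (K x)) \<and> set_pmf (K x) \<subseteq> belief_simplex \<and>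
      (\<Sum>y\<in>set_pmf (K x). pmf (K x) y *\<^sub>R y) = x"
  shows "bayes_plausible mu (bind_pmf \<rho> K)"
proof -
  have fin: "finite (set_pmf \<rho>)" using bp by (simp add: bayes_plausible_def)
  have fin_bind: "finite (set_pmf (bind_pmf \<rho> K))" using fin K by simp
  have "(\<Sum>y\<in>set_pmf (bind_pmf \<rho> K). pmf (bind_pmf \<rho> K) y *\<^sub>R y)
      = (\<Sum>x\<in>set_pmf \<rho>. pmf \<rho> x *\<^sub>R measure_pmf.expectation (K x) (\<lambda>y. y))"
    unfolding sum_set_pmf_eq_expectation[OF fin_bind]
    using fin K by (intro pmf_expectation_bind) auto
  also have "\<dots> = mu"
    using bp K by (simp add: bayes_plausible_def flip: sum_set_pmf_eq_expectation)
  finally show ?thesis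
    using bp K fin_bind by (auto simp: bayes_plausible_def)
qed

definition distorted_value ::
  "(real^'n \<Rightarrow> 'n \<Rightarrow> real) \<Rightarrow> (real^'n \<Rightarrow> real^'n) \<Rightarrow> (real^'n \<Rightarrow> real^'n) \<Rightarrow> real^'n \<Rightarrow> real"
  where "distorted_value u astar \<phi> x = bexp x (u (astar (\<phi> x)))"

lemma respects_blackwellD:
  assumes "respects_blackwell mu \<phi>" "decision_problem A u astar"
    and "bayes_plausible mu \<rho>" "bayes_plausible mu \<rho>'" "mpc \<rho>' \<rho>"
  shows "pexp \<rho>' (distorted_value u astar \<phi>) \<le> pexp \<rho> (distorted_value u astar \<phi>)"
  using assms unfolding respects_blackwell_def distorted_value_def by blast

lemma respects_blackwell_split:
  fixes a b Y :: "real^'n" and t :: real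
  defines "X \<equiv> (1 - t) *\<^sub>R a + t *\<^sub>R b"
  assumes rb: "respects_blackwell mu \<phi>" and dp: "decision_problem A u astar"
    and S: "a \<in> belief_simplex" "b \<in> belief_simplex" "Y \<in> belief_simplex"
    and t: "0 \<le> t" "t \<le> 1" and mu: "mu \<in> open_segment X Y"
  shows "distorted_value u astar \<phi> X
    \<le> (1 - t) * distorted_value u astar \<phi> a + t * distorted_value u astar \<phi> b"
proof -
  let ?W = "distorted_value u astar \<phi>"
  obtain p where p: "0 < p" "p < 1" "mu = (1 - p) *\<^sub>R X + p *\<^sub>R Y" and XY: "X \<noteq> Y"
    using mu by (auto simp: in_segment)
  have XS: "X \<in> belief_simplex"
    unfolding X_def using S t by (intro convexD[OF convex_belief_simplex]) auto
  define \<rho> where "\<rho> = two_point_pmf (1 - p) X Y"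
  define K where "K z = (if z = X then two_point_pmf (1 - t) a b else return_pmf z)" for z
  have fin_\<rho>: "finite (set_pmf \<rho>)" and fin_K: "finite (set_pmf (K z))" for z
    by (simp_all add: \<rho>_def K_def finite_set_two_point_pmf)
  have E_\<rho>: "measure_pmf.expectation \<rho> f = (1 - p) *\<^sub>R f X + p *\<^sub>R f Y"
    for f :: "real^'n \<Rightarrow> 'b::{banach, second_countable_topology}"
    using p by (simp add: \<rho>_def expectation_two_point_pmf)
  have E_K: "measure_pmf.expectation (K z) f = (if z = X then (1 - t) *\<^sub>R f a + t *\<^sub>R f b else f z)"
    for z and f :: "real^'n \<Rightarrow> 'b::{banach, second_countable_topology}"
    using t by (simp add: K_def expectation_two_point_pmf)
  have set_\<rho>: "set_pmf \<rho> \<subseteq> {X, Y}"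
    by (simp add: \<rho>_def set_two_point_pmf_subset)
  have bp: "bayes_plausible mu \<rho>"
    using fin_\<rho> set_\<rho> XS S p by (auto simp: bayes_plausible_def sum_set_pmf_eq_expectation E_\<rho>)
  have K_spread: "finite (set_pmf (K x)) \<and> set_pmf (K x) \<subseteq> belief_simplex \<and>
      (\<Sum>y\<in>set_pmf (K x). pmf (K x) y *\<^sub>R y) = x" if "x \<in> set_pmf \<rho>" for x
  proof -
    have "set_pmf (K x) \<subseteq> (if x = X then {a, b} else {x})"
      by (simp add: K_def set_two_point_pmf_subset)
    then show ?thesis
      using that set_\<rho> fin_K S XS by (auto simp: sum_set_pmf_eq_expectation E_K X_def split: if_splits)
  qed
  have "pexp \<rho> ?W \<le> pexp (bind_pmf \<rho> K) ?W"
    using bayes_plausible_bind[OF bp K_spread] K_spread bp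
    by (intro respects_blackwellD[OF rb dp]) (auto simp: mpc_def)
  also have "pexp (bind_pmf \<rho> K) ?W = (\<Sum>z\<in>set_pmf \<rho>. pmf \<rho> z *\<^sub>R measure_pmf.expectation (K z) ?W)"
    using pmf_expectation_bind[of "set_pmf \<rho>" K \<rho> ?W] fin_\<rho> fin_K by (simp add: pexp_eq_expectation)
  also have "\<dots> = measure_pmf.expectation \<rho> (\<lambda>z. measure_pmf.expectation (K z) ?W)"
    by (rule sum_set_pmf_eq_expectation[OF fin_\<rho>])
  finally have "(1 - p) * ?W X + p * ?W Y \<le> (1 - p) * ((1 - t) * ?W a + t * ?W b) + p * ?W Y"
    using XY by (simp add: pexp_eq_expectation[OF fin_\<rho>] E_\<rho> E_K)
  then show ?thesis
    using p by simp
qed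

lemma distorted_value_convex_on_ray:
  fixes mu x :: "real^'n"
  assumes rb: "respects_blackwell mu \<phi>" and dp: "decision_problem A u astar"
    and mu: "mu \<in> rel_interior belief_simplex" and x: "x \<in> belief_simplex" "x \<noteq> mu"
  shows "convex_on {0..1} (\<lambda>t. distorted_value u astar \<phi> (mu + t *\<^sub>R (x - mu)))"
proof (rule convex_on_linorderI)
  fix t c1 c2 :: real
  assume t: "0 < t" "t < 1" and c: "c1 \<in> {0..1}" "c2 \<in> {0..1}" "c1 < c2"
  define L where "L c = mu + c *\<^sub>R (x - mu)" for c
  have muS: "mu \<in> belief_simplex"
    using mu rel_interior_subset by blast
  obtain e where e: "e > 1" "(1 - e) *\<^sub>R x + e *\<^sub>R mu \<in> belief_simplex"
    using convex_rel_interior_iff[OF convex_belief_simplex] mu x by blast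
  have comb: "(1 - t) *\<^sub>R L c1 + t *\<^sub>R L c2 = L ((1 - t) * c1 + t * c2)"
    by (simp add: L_def algebra_simps)
  have "0 < (1 - t) * c1 + t * c2"
    using t c by (intro add_nonneg_pos mult_nonneg_nonneg mult_pos_pos) auto
  then have "L 0 \<in> L ` open_segment ((1 - t) * c1 + t * c2) (1 - e)"
    using e(1) by (intro imageI) (simp add: open_segment_eq_real_ivl)
  then have "L 0 \<in> open_segment (L ((1 - t) * c1 + t * c2)) (L (1 - e))"
    using open_segment_on_line[of "x - mu" mu] x(2) unfolding L_def by simp
  then have "mu \<in> open_segment ((1 - t) *\<^sub>R L c1 + t *\<^sub>R L c2) (L (1 - e))"
    unfolding comb by (simp add: L_def)
  moreover have "L (1 - e) \<in> belief_simplex"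
    using e(2) by (simp add: L_def algebra_simps)
  ultimately have "distorted_value u astar \<phi> ((1 - t) *\<^sub>R L c1 + t *\<^sub>R L c2)
      \<le> (1 - t) * distorted_value u astar \<phi> (L c1) + t * distorted_value u astar \<phi> (L c2)"
    using t c muS x
    by (intro respects_blackwell_split[OF rb dp]) (simp_all add: L_def segment_in_belief_simplex)
  then show "distorted_value u astar \<phi> (mu + ((1 - t) *\<^sub>R c1 + t *\<^sub>R c2) *\<^sub>R (x - mu))
      \<le> (1 - t) * distorted_value u astar \<phi> (mu + c1 *\<^sub>R (x - mu))
        + t * distorted_value u astar \<phi> (mu + c2 *\<^sub>R (x - mu))"
    unfolding comb by (simp add: L_def)
qed simp

lemma bexp_zero_payoff [simp]: "bexp y (\<lambda>_. 0) = 0"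
  by (simp add: bexp_def)

definition bet_payoff :: "('n \<Rightarrow> real) \<Rightarrow> real^'n \<Rightarrow> 'n \<Rightarrow> real" where
  "bet_payoff g a = (if a = 1 then g else (\<lambda>_. 0))"

definition bet_choice :: "('n \<Rightarrow> real) \<Rightarrow> real^'n \<Rightarrow> real^'n" where
  "bet_choice g y = (if 0 < bexp y g then 1 else 0)"

lemma zero_neq_one_vec: "(0::real^'n) \<noteq> 1"
  by (metis vec_eq_iff zero_index one_index zero_neq_one)

lemma decision_problem_bet: "decision_problem {0, 1} (bet_payoff g) (bet_choice g)"
  using zero_neq_one_vec
  by (auto simp: decision_problem_def bet_payoff_def bet_choice_def finite_imp_compact continuous_on_finite)

lemma distorted_value_bet:
  "distorted_value (bet_payoff g) (bet_choice g) \<phi> x = (if 0 < bexp (\<phi> x) g then bexp x g else 0)"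
  using zero_neq_one_vec by (simp add: distorted_value_def bet_payoff_def bet_choice_def)

lemma bexp_line_coordinate:
  fixes mu d :: "real^'n"
  assumes "d \<noteq> 0" "mu + t *\<^sub>R d \<in> belief_simplex"
  shows "bexp (mu + t *\<^sub>R d) (\<lambda>i. (d $ i - mu \<bullet> d) / (d \<bullet> d) - r) = t - r"
proof -
  let ?y = "mu + t *\<^sub>R d"
  have sum1: "(\<Sum>i\<in>UNIV. ?y $ i) = 1"
    using assms(2) by (simp add: belief_simplex_def)
  have "bexp ?y (\<lambda>i. (d $ i - mu \<bullet> d) / (d \<bullet> d) - r)
      = (?y \<bullet> d - (mu \<bullet> d) * (\<Sum>i\<in>UNIV. ?y $ i)) / (d \<bullet> d) - r * (\<Sum>i\<in>UNIV. ?y $ i)"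
    by (simp add: bexp_def inner_vec_def sum_subtractf sum_divide_distrib sum_distrib_left
        diff_divide_distrib right_diff_distrib mult.commute)
  also have "\<dots> = t - r"
    using assms(1) sum1 by (simp add: inner_add_left)
  finally show ?thesis .
qed

lemma threshold_value_convex:
  fixes mu x :: "real^'n"
  assumes rb: "respects_blackwell mu \<phi>"
    and mu: "mu \<in> rel_interior belief_simplex" and x: "x \<in> belief_simplex" "x \<noteq> mu"
    and \<sigma>: "\<And>t. t \<in> {0..1} \<Longrightarrow> \<sigma> t \<in> {0..t} \<and> \<phi> (mu + t *\<^sub>R (x - mu)) = mu + \<sigma> t *\<^sub>R (x - mu)"
  shows "convex_on {0..1} (\<lambda>t. if r < \<sigma> t then t - r else 0)"
proof (rule convex_on_eq)
  define d where "d = x - mu"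
  define g where "g i = (d $ i - mu \<bullet> d) / (d \<bullet> d) - r" for i
  have muS: "mu \<in> belief_simplex"
    using mu rel_interior_subset by blast
  have d: "d \<noteq> 0"
    using x(2) by (simp add: d_def)
  show "convex_on {0..1} (\<lambda>t. distorted_value (bet_payoff g) (bet_choice g) \<phi> (mu + t *\<^sub>R (x - mu)))"
    using distorted_value_convex_on_ray[OF rb decision_problem_bet mu x] .
  fix t :: real
  assume t: "t \<in> {0..1}"
  have "bexp (mu + s *\<^sub>R d) g = s - r" if "s \<in> {0..1}" for s
    unfolding g_def using that muS x d by (intro bexp_line_coordinate) (auto simp: d_def segment_in_belief_simplex)
  moreover have "\<sigma> t \<in> {0..1}"
    using \<sigma>[OF t] t by auto
  ultimately show "distorted_value (bet_payoff g) (bet_choice g) \<phi> (mu + t *\<^sub>R (x - mu))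
      = (if r < \<sigma> t then t - r else 0)"
    using \<sigma>[OF t] t by (simp add: distorted_value_bet d_def)
qed

lemma no_expansive_error_on_segment:
  assumes noexp: "\<forall>x\<in>belief_simplex. \<not> expansive_error mu \<phi> x"
    and S: "mu \<in> belief_simplex" "x \<in> belief_simplex"
  obtains \<sigma> where "\<And>t. t \<in> {0..1} \<Longrightarrow> \<sigma> t \<in> {0..t} \<and> \<phi> (mu + t *\<^sub>R (x - mu)) = mu + \<sigma> t *\<^sub>R (x - mu)"
proof -
  have "\<exists>s\<in>{0..t}. \<phi> (mu + t *\<^sub>R (x - mu)) = mu + s *\<^sub>R (x - mu)" if t: "t \<in> {0..1}" for t
  proof -
    have "\<phi> (mu + t *\<^sub>R (x - mu)) \<in> closed_segment (mu + t *\<^sub>R (x - mu)) mu"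
      using noexp S t by (simp add: expansive_error_def segment_in_belief_simplex)
    then have "\<phi> (mu + t *\<^sub>R (x - mu)) \<in> (\<lambda>s. mu + s *\<^sub>R (x - mu)) ` closed_segment t 0"
      using closed_segment_on_line[of mu t "x - mu" 0] by simp
    then show ?thesis
      using t by (force simp: closed_segment_eq_real_ivl split: if_splits)
  qed
  then show ?thesis
    using that by metis
qed

lemma convex_threshold_below:
  fixes \<sigma> :: "real \<Rightarrow> real"
  assumes conv: "convex_on {0..1} (\<lambda>t. if r < \<sigma> t then t - r else 0)"
    and r: "0 \<le> r" "r < b" "b \<le> 1" "\<sigma> b \<le> r" and c: "r < c" "c < 1"
  shows "\<sigma> c \<le> r"
proof (rule ccontr)
  define f where "f = (\<lambda>t. if r < \<sigma> t then t - r else 0)"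
  assume "\<not> \<sigma> c \<le> r"
  then have fc: "f c = c - r"
    by (simp add: f_def)
  have f0: "f r = 0" "f b = 0"
    using r by (simp_all add: f_def)
  have conv_f: "convex_on {a..b} f" if "0 \<le> a" "b \<le> 1" for a b
    using that by (intro convex_on_subset[OF conv[folded f_def]]) auto
  consider "c \<le> b" | "b < c" by linarith
  then show False
  proof cases
    case 1
    have "f c \<le> (f b - f r) / (b - r) * (c - r) + f r"
      using 1 c r by (intro convex_onD_Icc' conv_f) auto
    then show False
      using fc f0 c by simp
  next
    case 2
    \<comment> \<open>The chord from (b, 0) to (1, 1 - r) stays strictly below t - r on (b, 1).\<close>
    have "c - r \<le> (f 1 - f b) / (1 - b) * (c - b) + f b"
      unfolding fc[symmetric] using 2 c r by (intro convex_onD_Icc' conv_f) auto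
    also have "\<dots> = f 1 / (1 - b) * (c - b)"
      using f0 by simp
    also have "\<dots> \<le> (1 - r) / (1 - b) * (c - b)"
      using 2 c r by (intro mult_right_mono divide_right_mono) (auto simp: f_def)
    finally have "(c - r) * (1 - b) \<le> (1 - r) * (c - b)"
      using 2 c by (simp add: field_simps)
    moreover have "(c - r) * (1 - b) - (1 - r) * (c - b) = (b - r) * (1 - c)"
      by (simp add: algebra_simps)
    moreover have "(b - r) * (1 - c) > 0"
      using r c by simp
    ultimately show False
      by linarith
  qed
qed

lemma convex_thresholds_constant_tail:
  fixes \<sigma> :: "real \<Rightarrow> real"
  assumes conv: "\<And>r. convex_on {0..1} (\<lambda>t. if r < \<sigma> t then t - r else 0)"
    and nonneg: "\<And>t. t \<in> {0..1} \<Longrightarrow> 0 \<le> \<sigma> t" and "\<sigma> 1 < 1"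
  shows "\<exists>s. 0 \<le> s \<and> s \<le> \<sigma> 1 \<and> (\<forall>t\<in>{s<..<1}. \<sigma> t = s)"
proof -
  define q where "q = (\<sigma> 1 + 1) / 2"
  have q: "\<sigma> 1 < q" "q < 1" "0 \<le> \<sigma> 1" "0 \<le> \<sigma> q"
    using assms(3) nonneg[of 1] nonneg[of q] by (auto simp: q_def)
  have q_le: "\<sigma> q \<le> \<sigma> 1"
    by (rule convex_threshold_below[where b=1, OF conv]) (use q in linarith)+
  have tail: "\<sigma> t = \<sigma> q" if t: "\<sigma> q < t" "t < 1" for t
  proof (rule antisym)
    show "\<sigma> t \<le> \<sigma> q"
      by (rule convex_threshold_below[where b=q, OF conv]) (use q q_le t in linarith)+
    have "0 \<le> \<sigma> t"
      using q t by (intro nonneg) simp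
    then have "\<sigma> t < \<sigma> q \<Longrightarrow> \<sigma> q \<le> \<sigma> t"
      by (rule convex_threshold_below[where b=t, OF conv]) (use q q_le t in linarith)+
    then show "\<sigma> q \<le> \<sigma> t"
      by linarith
  qed
  have "\<forall>t\<in>{\<sigma> q<..<1}. \<sigma> t = \<sigma> q"
  proof
    fix t assume "t \<in> {\<sigma> q<..<1}"
    then show "\<sigma> t = \<sigma> q"
      by (intro tail) auto
  qed
  then show ?thesis
    using q q_le by blast
qed

lemma constant_tail_on_ray:
  fixes mu x :: "'a::real_vector"
  assumes "x \<noteq> mu"
    and \<sigma>: "\<And>t. t \<in> {0..1} \<Longrightarrow> \<phi> (mu + t *\<^sub>R (x - mu)) = mu + \<sigma> t *\<^sub>R (x - mu)"
    and s: "0 \<le> s" "s \<le> \<sigma> 1" "s < 1" "\<forall>t\<in>{s<..<1}. \<sigma> t = s"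
  shows "\<exists>xs\<in>closed_segment mu (\<phi> x). \<forall>x'\<in>open_segment xs x. \<phi> x' = xs"
proof (intro bexI ballI)
  define L where "L t = mu + t *\<^sub>R (x - mu)" for t
  have \<phi>x: "\<phi> x = L (\<sigma> 1)"
    using \<sigma>[of 1] by (simp add: L_def)
  show "L s \<in> closed_segment mu (\<phi> x)"
    using closed_segment_on_line[of mu 0 "x - mu" "\<sigma> 1"] s by (auto simp: \<phi>x L_def closed_segment_eq_real_ivl)
  fix x' assume "x' \<in> open_segment (L s) x"
  then obtain t where t: "t \<in> {s<..<1}" "x' = L t"
    using open_segment_on_line[of "x - mu" mu s 1] assms(1) s by (auto simp: L_def open_segment_eq_real_ivl)
  then have "\<phi> (L t) = L (\<sigma> t)"
    using \<sigma>[of t] s by (simp add: L_def)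
  then show "\<phi> x' = L s"
    using t s(4) by simp
qed

theorem corollary4:
  fixes mu :: "real^'n" and \<phi> :: "real^'n \<Rightarrow> real^'n" and x1 :: "real^'n"
  assumes "CARD('n) \<ge> 2"
    and "mu \<in> rel_interior belief_simplex"
    and "\<forall>x\<in>belief_simplex. \<phi> x \<in> belief_simplex"
    and "respects_blackwell mu \<phi>"
    and "x1 \<in> belief_simplex"
    and "contractive_error mu \<phi> x1"
    and "\<forall>x\<in>belief_simplex. \<not> expansive_error mu \<phi> x"
  shows "\<exists>x1s\<in>closed_segment mu (\<phi> x1). \<forall>x'\<in>open_segment x1s x1. \<phi> x' = x1s"
proof -
  define L where "L t = mu + t *\<^sub>R (x1 - mu)" for t
  have muS: "mu \<in> belief_simplex"
    using assms(2) rel_interior_subset by blast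
  have contr: "\<phi> x1 \<noteq> x1" "x1 \<noteq> mu"
    using assms(6) by (auto simp: contractive_error_def)
  obtain \<sigma> where \<sigma>: "\<And>t. t \<in> {0..1} \<Longrightarrow> \<sigma> t \<in> {0..t} \<and> \<phi> (L t) = L (\<sigma> t)"
    using no_expansive_error_on_segment[OF assms(7) muS assms(5)] unfolding L_def by blast
  have \<phi>x1: "\<phi> x1 = L (\<sigma> 1)"
    using \<sigma>[of 1] by (simp add: L_def)
  then have "\<sigma> 1 \<noteq> 1"
    using contr(1) by (auto simp: L_def)
  then have \<sigma>1: "\<sigma> 1 < 1"
    using \<sigma>[of 1] by simp
  moreover have "convex_on {0..1} (\<lambda>t. if r < \<sigma> t then t - r else 0)" for r
    using \<sigma> unfolding L_def by (rule threshold_value_convex[OF assms(4,2,5) contr(2)])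
  moreover have "0 \<le> \<sigma> t" if "t \<in> {0..1}" for t
    using \<sigma>[OF that] by simp
  ultimately obtain s where s: "0 \<le> s" "s \<le> \<sigma> 1" "\<forall>t\<in>{s<..<1}. \<sigma> t = s"
    using convex_thresholds_constant_tail by blast
  then show ?thesis
    using constant_tail_on_ray[of x1 mu \<phi> \<sigma> s] contr(2) \<sigma> \<sigma>1 unfolding L_def by force
qed

end
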